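(* (McDiarmid's inequality under Poisson sampling.) Let $k\ge1$ and $n\ge 1$ be integers, $\vec p$ a probability distribution on $[k]$, and $\hat f:[k]^*\to\mathbb{R}$ an estimator whose sensitivity satisfies $1/n\le S(\hat f)<\infty$. Let $N\sim\mathrm{Poi}(n)$ and, conditionally on $N$, let $X^N$ be $N$ i.i.d. samples from $\vec p$. Then for every $\varepsilon\in(0,1)$, \[ \Pr\Big(\big|\hat f(X^N)-\mathbb{E}[\hat f(X^N)]\big|>\varepsilon\Big)\le 4\exp\Big(-\frac{\varepsilon^2}{2n\,(4S(\hat f))^2}\Big). \]
   Context: $[k]:=\{1,\dots,k\}$ and $[k]^*$ is the set of finite sequences over $[k]$ (including the empty sequence). The sensitivity of $\hat f$ is \[ S(\hat f):=\sup\{|\hat f(x)-\hat f(y)| : x,y\in[k]^*,\ y \text{ is obtained from } x \text{ by changing, inserting, or deleting a single symbol}\}. \] *)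

theory Defs
  imports "HOL-Probability.Probability"
begin

text \<open>The alphabet [k] = {1..k}; finite sequences over [k] are lists with all entries in {1..k}.\<close>

definition one_edit :: "nat list \<Rightarrow> nat list \<Rightarrow> bool" where
  "one_edit x y \<longleftrightarrow>
     (\<exists>u v a b. x = u @ a # v \<and> y = u @ b # v) \<or>
     (\<exists>u v a. x = u @ v \<and> y = u @ a # v) \<or>
     (\<exists>u v a. x = u @ a # v \<and> y = u @ v)"

definition sens_set :: "nat \<Rightarrow> (nat list \<Rightarrow> real) \<Rightarrow> real set" where
  "sens_set k f = {\<bar>f x - f y\<bar> | x y.
      set x \<subseteq> {1..k} \<and> set y \<subseteq> {1..k} \<and> one_edit x y}"

text \<open>Sensitivity S(f) (a real number; meaningful when the set is bounded above, i.e. S(f) finite).\<close>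
definition sensitivity :: "nat \<Rightarrow> (nat list \<Rightarrow> real) \<Rightarrow> real" where
  "sensitivity k f = Sup (sens_set k f)"

definition poisson_sample :: "nat \<Rightarrow> nat pmf \<Rightarrow> nat list pmf" where
  "poisson_sample n p = bind_pmf (poisson_pmf (real n)) (\<lambda>N. replicate_pmf N p)"

end

(*
  Let g N = iid_expectation p N f be the mean of f on N i.i.d. samples and S the sensitivity. Split
    f(X^N) - E f(X^N) = (f(X^N) - g N) + (g N - g n) + (g n - E f(X^N)).
  Conditionally on N the first term obeys McDiarmid's inequality, and its moment generating function
  exp(l^2 N S^2 / 8) is then averaged against Poi(n). Deleting a symbol changes f by at most S, so
  g is S-Lipschitz: the second term is at most S |N - n|, which has Chernoff tails, and the third,
  deterministic, is at most S E|N - n| <= 7/4 S sqrt n. Each of the four one-sided tails costs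
  exp(-eps^2 / (32 S^2 n)). When eps^2 <= 40 S^2 n the claimed bound is at least 1 anyway.
*)
theory Submission
  imports Defs
begin

lemma exp_le_1_plus_x_plus_sq:
  fixes y :: real assumes "\<bar>y\<bar> \<le> 1" shows "exp y \<le> 1 + y + y\<^sup>2"
proof (cases "y \<ge> 0")
  case True then show ?thesis using exp_bound[of y] assms by auto
next
  case False
  define m where "m = - y"
  have m: "0 \<le> m" "m \<le> 1" using False assms by (auto simp: m_def)
  have "1 \<le> (1 - m + m\<^sup>2) * (1 + m)" using m by (simp add: algebra_simps power2_eq_square power3_eq_cube)
  also have "\<dots> \<le> (1 - m + m\<^sup>2) * exp m"
    using m zero_le_power2[of m] by (intro mult_left_mono) auto
  finally have "exp (-m) \<le> 1 - m + m\<^sup>2" by (simp add: exp_minus field_simps)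
  then show ?thesis by (simp add: m_def)
qed

lemma exp_plus_exp_minus_ge:
  fixes y :: real shows "2 + y\<^sup>2 \<le> exp y + exp (-y)"
proof -
  have "2 + t\<^sup>2 \<le> exp t + exp (-t)" if "0 \<le> t" for t :: real
  proof -
    have "(\<lambda>x. exp x + exp (-x) - 2 - x\<^sup>2) 0 \<le> (\<lambda>x. exp x + exp (-x) - 2 - x\<^sup>2) t"
    proof (rule DERIV_nonneg_imp_increasing_open[OF that])
      fix x :: real assume "0 < x"
      then have "2 * x \<le> exp x - exp (-x)" using real_le_x_sinh[of x] by (simp add: exp_minus)
      then show "\<exists>y. ((\<lambda>x. exp x + exp (-x) - 2 - x\<^sup>2) has_real_derivative y) (at x) \<and> 0 \<le> y"
        by (intro exI conjI) (auto intro!: derivative_eq_intros)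
    qed (intro continuous_intros)
    then show ?thesis by simp
  qed
  from this[of "\<bar>y\<bar>"] show ?thesis by (cases "0 \<le> y") (auto simp: add.commute)
qed

lemma abs_le_exp_plus_exp_minus:
  fixes x a :: real assumes a: "a > 0"
  shows "\<bar>x\<bar> \<le> 2 * a * (exp (x / (2 * a)) + exp (- (x / (2 * a))) - 2) + a / 2"
proof -
  have "0 \<le> (\<bar>x\<bar> - a)\<^sup>2" by simp
  then have "\<bar>x\<bar> \<le> 2 * a * (x / (2 * a))\<^sup>2 + a / 2"
    using a by (simp add: power2_eq_square field_simps)
  also have "2 * a * (x / (2 * a))\<^sup>2 \<le> 2 * a * (exp (x / (2 * a)) + exp (- (x / (2 * a))) - 2)"
    using exp_plus_exp_minus_ge[of "x / (2 * a)"] a by (intro mult_left_mono) auto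
  finally show ?thesis by simp
qed

lemma one_le_four_exp_minus:
  fixes x :: real assumes "x \<le> 5/4" shows "1 \<le> 4 * exp (- x)"
proof -
  have "exp x \<le> exp (5/4)" using assms by simp
  also have "exp (5/4::real) = exp (1/4) ^ 5" using exp_of_nat_mult[of 5 "1/4::real"] by simp
  also have "\<dots> \<le> (21/16) ^ 5"
    using exp_bound[of "1/4::real"] by (intro power_mono) (auto simp: power2_eq_square)
  also have "\<dots> \<le> (4::real)" by (simp add: power_divide)
  finally show ?thesis by (simp add: exp_minus field_simps)
qed

section \<open>Moments and tails of the Poisson distribution\<close>

lemma nn_integral_poisson_exp:
  assumes r: "r > 0"
  shows "(\<integral>\<^sup>+N. ennreal (exp (c * real N)) \<partial>poisson_pmf r) = ennreal (exp (r * (exp c - 1)))"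
proof -
  have summ: "summable (\<lambda>N. (r * exp c) ^ N / fact N)"
    using summable_exp_generic[of "r * exp c"] by (simp add: divide_inverse mult.commute)
  have "(\<integral>\<^sup>+N. ennreal (exp (c * real N)) \<partial>poisson_pmf r)
      = (\<integral>\<^sup>+N. ennreal ((r * exp c) ^ N / fact N * exp (-r)) \<partial>count_space UNIV)"
    using r by (subst nn_integral_measure_pmf, intro nn_integral_cong)
       (simp add: ennreal_mult'[symmetric] power_mult_distrib exp_of_nat_mult[symmetric] mult.commute)
  also have "\<dots> = ennreal (\<Sum>N. (r * exp c) ^ N / fact N * exp (-r))"
    using r by (subst nn_integral_count_space_nat)
       (rule suminf_ennreal2[OF _ summable_mult2[OF summ]], simp)
  also have "(\<Sum>N. (r * exp c) ^ N / fact N * exp (-r)) = (\<Sum>N. (r * exp c) ^ N / fact N) * exp (-r)"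
    using summ by (rule suminf_mult2[symmetric])
  also have "(\<Sum>N. (r * exp c) ^ N / fact N) = exp (r * exp c)"
    using exp_converges[of "r * exp c"] by (simp add: sums_iff divide_inverse mult.commute)
  also have "exp (r * exp c) * exp (-r) = exp (r * (exp c - 1))"
    by (simp add: mult_exp_exp algebra_simps)
  finally show ?thesis .
qed

lemma nn_integral_poisson_centered_exp_le:
  assumes r: "r > 0" and c: "\<bar>c\<bar> \<le> 1"
  shows "(\<integral>\<^sup>+N. ennreal (exp (c * (real N - r))) \<partial>poisson_pmf r) \<le> ennreal (exp (r * c\<^sup>2))"
proof -
  have "(\<integral>\<^sup>+N. ennreal (exp (c * (real N - r))) \<partial>poisson_pmf r)
      = ennreal (exp (- c * r)) * (\<integral>\<^sup>+N. ennreal (exp (c * real N)) \<partial>poisson_pmf r)"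
    by (subst nn_integral_cmult[symmetric])
       (simp_all add: ennreal_mult'[symmetric] mult_exp_exp algebra_simps)
  also have "\<dots> = ennreal (exp (r * (exp c - 1 - c)))"
    by (simp add: nn_integral_poisson_exp[OF r] ennreal_mult'[symmetric] mult_exp_exp algebra_simps)
  also have "\<dots> \<le> ennreal (exp (r * c\<^sup>2))"
    using exp_le_1_plus_x_plus_sq[OF c] r by (intro ennreal_leI) (simp add: mult_left_mono)
  finally show ?thesis .
qed

lemma integrable_poisson_exp:
  assumes "r > 0" shows "integrable (poisson_pmf r) (\<lambda>N. exp (c * real N))"
  by (rule integrableI_nn_integral_finite[OF _ _ nn_integral_poisson_exp[OF assms]]) auto

lemma integrable_poisson_real:
  assumes "r > 0" shows "integrable (poisson_pmf r) real"
proof (rule Bochner_Integration.integrable_bound[OF integrable_poisson_exp[OF assms, of 1]])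
  show "AE N in poisson_pmf r. norm (real N) \<le> norm (exp (1 * real N))"
    by (intro always_eventually allI) (simp add: exp_ge_add_one_self order_trans[OF _ exp_ge_add_one_self])
qed simp

lemma expectation_poisson_centered_exp_le:
  assumes r: "r > 0" and c: "\<bar>c\<bar> \<le> 1"
  shows "measure_pmf.expectation (poisson_pmf r) (\<lambda>N. exp (c * (real N - r))) \<le> exp (r * c\<^sup>2)"
  using nn_integral_poisson_centered_exp_le[OF assms]
  by (subst integral_eq_nn_integral) (auto simp: enn2real_leI)

lemma expectation_poisson_abs_deviation_le:
  assumes r: "r \<ge> 1"
  shows "measure_pmf.expectation (poisson_pmf r) (\<lambda>N. \<bar>real N - r\<bar>) \<le> 7/4 * sqrt r"
proof -
  define a where "a = sqrt r"
  define \<mu> where "\<mu> = 1 / (2 * a)"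
  have a: "a \<ge> 1" "a\<^sup>2 = r" using r by (auto simp: a_def)
  have \<mu>: "\<bar>\<mu>\<bar> \<le> 1" "\<bar>-\<mu>\<bar> \<le> 1" "r * \<mu>\<^sup>2 = 1/4"
    using a by (auto simp: \<mu>_def power2_eq_square field_simps)
  have r0: "r > 0" using r by simp
  define u where "u \<sigma> N = exp (\<sigma> * (real N - r))" for \<sigma> N
  have u_int: "integrable (poisson_pmf r) (u \<sigma>)" for \<sigma>
  proof -
    have "u \<sigma> = (\<lambda>N. exp (- \<sigma> * r) * exp (\<sigma> * real N))"
      by (simp add: u_def fun_eq_iff mult_exp_exp algebra_simps)
    then show ?thesis using integrable_poisson_exp[OF r0] by simp
  qed
  have pointwise: "\<bar>real N - r\<bar> \<le> 2 * a * (u \<mu> N + u (-\<mu>) N - 2) + a / 2" for N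
    using abs_le_exp_plus_exp_minus[of a "real N - r"] a by (simp add: u_def \<mu>_def)
  have "measure_pmf.expectation (poisson_pmf r) (\<lambda>N. \<bar>real N - r\<bar>)
      \<le> measure_pmf.expectation (poisson_pmf r) (\<lambda>N. 2 * a * (u \<mu> N + u (-\<mu>) N - 2) + a / 2)"
    using pointwise integrable_poisson_real[OF r0] u_int by (intro integral_mono) auto
  also have "\<dots> = 2 * a * (measure_pmf.expectation (poisson_pmf r) (u \<mu>)
                    + measure_pmf.expectation (poisson_pmf r) (u (-\<mu>)) - 2) + a / 2"
    using u_int by simp
  also have "\<dots> \<le> 2 * a * (exp (1/4) + exp (1/4) - 2) + a / 2"
  proof -
    have "measure_pmf.expectation (poisson_pmf r) (u \<sigma>) \<le> exp (1/4)" if "\<sigma> = \<mu> \<or> \<sigma> = -\<mu>" for \<sigma>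
    proof -
      have "\<bar>\<sigma>\<bar> \<le> 1" "r * \<sigma>\<^sup>2 = 1/4" using that \<mu> by auto
      have "measure_pmf.expectation (poisson_pmf r) (u \<sigma>) \<le> exp (r * \<sigma>\<^sup>2)"
        unfolding u_def[abs_def] by (rule expectation_poisson_centered_exp_le[OF r0 \<open>\<bar>\<sigma>\<bar> \<le> 1\<close>])
      also have "\<dots> = exp (1/4)" using \<open>r * \<sigma>\<^sup>2 = 1/4\<close> by simp
      finally show ?thesis .
    qed
    then show ?thesis using a by (intro add_mono mult_left_mono diff_mono) auto
  qed
  also have "\<dots> \<le> 7/4 * a"
    using exp_bound[of "1/4::real"] a by (simp add: power2_eq_square)
  finally show ?thesis by (simp add: a_def)
qed

lemma poisson_tail_le:
  assumes r: "r > 0" and \<mu>: "\<mu> > 0" "\<bar>\<mu> * \<sigma>\<bar> \<le> 1"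
  shows "emeasure (poisson_pmf r) {N. t < \<sigma> * (real N - r)} \<le> ennreal (exp (r * (\<mu> * \<sigma>)\<^sup>2 - \<mu> * t))"
proof -
  have "emeasure (poisson_pmf r) {N. t < \<sigma> * (real N - r)}
      \<le> emeasure (poisson_pmf r) {N \<in> space (poisson_pmf r). t \<le> \<sigma> * (real N - r)}"
    by (intro emeasure_mono) auto
  also have "\<dots> \<le> ennreal (exp (- \<mu> * t)) *
      (\<integral>\<^sup>+N. ennreal (exp (\<mu> * (\<sigma> * (real N - r)))) * indicator (space (poisson_pmf r)) N \<partial>poisson_pmf r)"
    using \<mu> by (intro Chernoff_ineq_nn_integral_ge) auto
  also have "\<dots> = ennreal (exp (- \<mu> * t)) *
      (\<integral>\<^sup>+N. ennreal (exp ((\<mu> * \<sigma>) * (real N - r))) \<partial>poisson_pmf r)"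
    by (simp add: mult.assoc)
  also have "\<dots> \<le> ennreal (exp (- \<mu> * t)) * ennreal (exp (r * (\<mu> * \<sigma>)\<^sup>2))"
    by (intro mult_left_mono nn_integral_poisson_centered_exp_le r \<mu>) simp
  also have "\<dots> = ennreal (exp (r * (\<mu> * \<sigma>)\<^sup>2 - \<mu> * t))"
    by (simp add: ennreal_mult'[symmetric] mult_exp_exp)
  finally show ?thesis .
qed

section \<open>Expectations under i.i.d. sampling\<close>

definition iid_expectation :: "'a pmf \<Rightarrow> nat \<Rightarrow> ('a list \<Rightarrow> real) \<Rightarrow> real" where
  "iid_expectation p N h = measure_pmf.expectation (replicate_pmf N p) h"

lemma iid_expectation_uminus: "iid_expectation p N (\<lambda>xs. - h xs) = - iid_expectation p N h"
  by (simp add: iid_expectation_def)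

lemma map_pmf_length_replicate_pmf: "map_pmf length (replicate_pmf N p) = return_pmf N"
  by (subst map_pmf_cong[OF refl, of _ _ "\<lambda>_. N"]) (auto simp: set_replicate_pmf)

lemma map_pmf_length_poisson_sample: "map_pmf length (poisson_sample n p) = poisson_pmf (real n)"
  by (simp add: poisson_sample_def map_bind_pmf map_pmf_length_replicate_pmf bind_return_pmf')

lemma finite_set_pmf_replicate_pmf:
  "finite (set_pmf p) \<Longrightarrow> finite (set_pmf (replicate_pmf N p))"
  by (simp add: set_replicate_pmf lists_eq_set finite_lists_length_eq)

lemma iid_expectation_Suc:
  assumes "finite (set_pmf p)"
  shows "iid_expectation p (Suc N) h = measure_pmf.expectation p (\<lambda>x. iid_expectation p N (\<lambda>xs. h (x # xs)))"
proof -
  have "replicate_pmf (Suc N) p = bind_pmf p (\<lambda>x. map_pmf (Cons x) (replicate_pmf N p))"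
    by (simp add: map_pmf_def)
  then show ?thesis
    unfolding iid_expectation_def
    using assms finite_set_pmf_replicate_pmf[OF assms]
    by (simp add: pmf_expectation_bind[where A = "set_pmf p"] integral_measure_pmf_real mult.commute)
qed

lemma expectation_bind_pmf_nonneg:
  fixes h :: "'b \<Rightarrow> real"
  assumes nonneg: "\<And>y. 0 \<le> h y" and h: "integrable (bind_pmf M K) h"
    and K: "\<And>x. x \<in> set_pmf M \<Longrightarrow> integrable (K x) h"
  shows "integrable M (\<lambda>x. measure_pmf.expectation (K x) h)"
    and "measure_pmf.expectation (bind_pmf M K) h = measure_pmf.expectation M (\<lambda>x. measure_pmf.expectation (K x) h)"
proof -
  have "(\<integral>\<^sup>+y. h y \<partial>bind_pmf M K) = (\<integral>\<^sup>+x. (\<integral>\<^sup>+y. h y \<partial>K x) \<partial>M)"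
    by simp
  also have "\<dots> = (\<integral>\<^sup>+x. ennreal (measure_pmf.expectation (K x) h) \<partial>M)"
    using K nonneg by (intro nn_integral_cong_AE) (auto simp: AE_measure_pmf_iff nn_integral_eq_integral)
  finally have eq: "(\<integral>\<^sup>+y. h y \<partial>bind_pmf M K) = (\<integral>\<^sup>+x. ennreal (measure_pmf.expectation (K x) h) \<partial>M)" .
  have "(\<integral>\<^sup>+y. h y \<partial>bind_pmf M K) < \<infinity>"
    using h nonneg by (simp add: integrable_iff_bounded del: nn_integral_bind_pmf)
  then show "integrable M (\<lambda>x. measure_pmf.expectation (K x) h)"
    using nonneg by (intro integrableI_bounded) (simp_all add: eq integral_nonneg del: nn_integral_bind_pmf)
  have "measure_pmf.expectation (bind_pmf M K) h = enn2real (\<integral>\<^sup>+y. h y \<partial>bind_pmf M K)"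
    using nonneg by (simp add: integral_eq_nn_integral del: nn_integral_bind_pmf)
  also have "\<dots> = measure_pmf.expectation M (\<lambda>x. measure_pmf.expectation (K x) h)"
    unfolding eq using nonneg by (intro integral_eq_nn_integral[symmetric]) (auto simp: integral_nonneg)
  finally show "measure_pmf.expectation (bind_pmf M K) h = measure_pmf.expectation M (\<lambda>x. measure_pmf.expectation (K x) h)" .
qed

lemma expectation_bind_pmf:
  fixes h :: "'b \<Rightarrow> real"
  assumes h: "integrable (bind_pmf M K) h" and K: "\<And>x. x \<in> set_pmf M \<Longrightarrow> integrable (K x) h"
  shows "integrable M (\<lambda>x. measure_pmf.expectation (K x) h)"
    and "measure_pmf.expectation (bind_pmf M K) h = measure_pmf.expectation M (\<lambda>x. measure_pmf.expectation (K x) h)"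
proof -
  define hp hn where "hp = (\<lambda>y. max 0 (h y))" and "hn = (\<lambda>y. max 0 (- h y))"
  have split: "h = (\<lambda>y. hp y - hn y)" by (auto simp: hp_def hn_def fun_eq_iff)
  have ints: "integrable (bind_pmf M K) hp" "integrable (bind_pmf M K) hn"
    "\<And>x. x \<in> set_pmf M \<Longrightarrow> integrable (K x) hp" "\<And>x. x \<in> set_pmf M \<Longrightarrow> integrable (K x) hn"
    using h K by (auto simp: hp_def hn_def)
  note P = expectation_bind_pmf_nonneg[of hp, OF _ ints(1,3)]
  note N = expectation_bind_pmf_nonneg[of hn, OF _ ints(2,4)]
  have inner: "measure_pmf.expectation (K x) h = measure_pmf.expectation (K x) hp - measure_pmf.expectation (K x) hn"
    if "x \<in> set_pmf M" for x
    using ints(3,4)[OF that] by (subst split) simp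
  have cong: "measure_pmf.expectation M (\<lambda>x. measure_pmf.expectation (K x) h)
      = measure_pmf.expectation M (\<lambda>x. measure_pmf.expectation (K x) hp - measure_pmf.expectation (K x) hn)"
    using inner by (intro integral_cong_AE) (auto simp: AE_measure_pmf_iff)
  show "integrable M (\<lambda>x. measure_pmf.expectation (K x) h)"
    using P(1) N(1) inner
    by (subst integrable_cong_AE[where g = "\<lambda>x. measure_pmf.expectation (K x) hp - measure_pmf.expectation (K x) hn"])
       (auto simp: hp_def hn_def AE_measure_pmf_iff)
  show "measure_pmf.expectation (bind_pmf M K) h = measure_pmf.expectation M (\<lambda>x. measure_pmf.expectation (K x) h)"
    using P N ints(1,2) by (subst (1) split) (simp add: cong hp_def hn_def)
qed

lemma abs_expectation_le_const:
  fixes M :: "'a pmf" and F :: "'a \<Rightarrow> real"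
  assumes "integrable M F" and "\<And>x. x \<in> set_pmf M \<Longrightarrow> \<bar>F x\<bar> \<le> c"
  shows "\<bar>measure_pmf.expectation M F\<bar> \<le> c"
  using assms
  by (intro order_trans[OF integral_abs_bound] measure_pmf.integral_le_const)
     (auto simp: AE_measure_pmf_iff)

section \<open>McDiarmid's inequality under Poisson sampling\<close>

definition bounded_differences :: "'a set \<Rightarrow> ('a list \<Rightarrow> real) \<Rightarrow> real \<Rightarrow> bool" where
  "bounded_differences A h c \<longleftrightarrow>
     (\<forall>u v a b. set u \<subseteq> A \<longrightarrow> set v \<subseteq> A \<longrightarrow> a \<in> A \<longrightarrow> b \<in> A \<longrightarrow> \<bar>h (u @ a # v) - h (u @ b # v)\<bar> \<le> c)"

lemma bounded_differencesD:
  "bounded_differences A h c \<Longrightarrow> set u \<subseteq> A \<Longrightarrow> set v \<subseteq> A \<Longrightarrow> a \<in> A \<Longrightarrow> b \<in> A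
     \<Longrightarrow> \<bar>h (u @ a # v) - h (u @ b # v)\<bar> \<le> c"
  unfolding bounded_differences_def by blast

lemma bounded_differences_Cons:
  assumes "bounded_differences A h c" and "x \<in> A"
  shows "bounded_differences A (\<lambda>xs. h (x # xs)) c"
  unfolding bounded_differences_def
  using bounded_differencesD[OF assms(1), of "x # _"] assms(2) by auto

lemma bounded_differences_uminus:
  "bounded_differences A h c \<Longrightarrow> bounded_differences A (\<lambda>xs. - h xs) c"
  unfolding bounded_differences_def by (simp add: abs_minus_commute)

lemma Hoeffding_lemma_pmf:
  fixes h :: "'a \<Rightarrow> real"
  assumes fin: "finite (set_pmf p)" and l: "l > 0"
    and width: "\<And>x y. x \<in> set_pmf p \<Longrightarrow> y \<in> set_pmf p \<Longrightarrow> h y - h x \<le> c"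
  shows "(\<integral>\<^sup>+x. ennreal (exp (l * (h x - measure_pmf.expectation p h))) \<partial>p) \<le> ennreal (exp (l\<^sup>2 * c\<^sup>2 / 8))"
proof -
  define a where "a = Min (h ` set_pmf p)"
  have "a \<in> h ` set_pmf p" unfolding a_def using fin set_pmf_not_empty by (intro Min_in) auto
  then obtain x0 where x0: "x0 \<in> set_pmf p" "a = h x0" by blast
  have "h y \<in> {a..a + c}" if "y \<in> set_pmf p" for y
  proof -
    have "a \<le> h y" unfolding a_def using fin that by (intro Min_le) auto
    then show ?thesis using width[OF x0(1) that] x0(2) by auto
  qed
  then interpret interval_bounded_random_variable "measure_pmf p" h a "a + c"
    by unfold_locales (auto simp: AE_measure_pmf_iff)
  show ?thesis using Hoeffdings_lemma_nn_integral[OF l] by simp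
qed

lemma iid_expectation_Cons_diff_le:
  assumes fin: "finite (set_pmf p)" and bd: "bounded_differences (set_pmf p) h c"
    and x: "x \<in> set_pmf p" and y: "y \<in> set_pmf p"
  shows "iid_expectation p N (\<lambda>xs. h (y # xs)) - iid_expectation p N (\<lambda>xs. h (x # xs)) \<le> c"
proof -
  have int: "integrable (replicate_pmf N p) g" for g :: "'a list \<Rightarrow> real"
    by (rule integrable_measure_pmf_finite[OF finite_set_pmf_replicate_pmf[OF fin]])
  have "h (y # xs) - h (x # xs) \<le> c" if "xs \<in> set_pmf (replicate_pmf N p)" for xs
  proof -
    have "set xs \<subseteq> set_pmf p" using that by (auto simp: set_replicate_pmf)
    then show ?thesis using bounded_differencesD[OF bd, of "[]" xs y x] x y by auto
  qed
  then have "iid_expectation p N (\<lambda>xs. h (y # xs) - h (x # xs)) \<le> c"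
    unfolding iid_expectation_def
    by (intro measure_pmf.integral_le_const int) (auto simp: AE_measure_pmf_iff)
  then show ?thesis by (simp add: iid_expectation_def int)
qed

text \<open>McDiarmid's inequality in moment-generating-function form, by induction on the number of samples:
  conditioning on the first sample, the remaining deviation is controlled by the induction hypothesis
  and the conditional mean, which varies by at most \<open>c\<close>, by Hoeffding's lemma.\<close>
lemma nn_integral_replicate_pmf_exp_le:
  assumes fin: "finite (set_pmf p)" and l: "l > 0" and bd: "bounded_differences (set_pmf p) h c"
  shows "(\<integral>\<^sup>+xs. ennreal (exp (l * (h xs - iid_expectation p N h))) \<partial>replicate_pmf N p)
           \<le> ennreal (exp (l\<^sup>2 * real N * c\<^sup>2 / 8))"
  using bd
proof (induction N arbitrary: h)
  case 0
  then show ?case by (simp add: iid_expectation_def)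
next
  case (Suc N)
  define h1 where "h1 x = iid_expectation p N (\<lambda>xs. h (x # xs))" for x
  define E where "E = iid_expectation p (Suc N) h"
  define A where "A = exp (l\<^sup>2 * real N * c\<^sup>2 / 8)"
  have E: "E = measure_pmf.expectation p h1"
    unfolding E_def h1_def by (rule iid_expectation_Suc[OF fin])
  have inner: "(\<integral>\<^sup>+xs. ennreal (exp (l * (h (x # xs) - E))) \<partial>replicate_pmf N p)
      \<le> ennreal A * ennreal (exp (l * (h1 x - E)))" if x: "x \<in> set_pmf p" for x
  proof -
    have "(\<integral>\<^sup>+xs. ennreal (exp (l * (h (x # xs) - E))) \<partial>replicate_pmf N p)
        = (\<integral>\<^sup>+xs. ennreal (exp (l * (h (x # xs) - h1 x))) \<partial>replicate_pmf N p) * ennreal (exp (l * (h1 x - E)))"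
      by (subst nn_integral_multc[symmetric])
         (simp_all add: ennreal_mult'[symmetric] mult_exp_exp algebra_simps)
    also have "\<dots> \<le> ennreal A * ennreal (exp (l * (h1 x - E)))"
      using Suc.IH[OF bounded_differences_Cons[OF Suc.prems x]]
      by (intro mult_right_mono) (simp_all add: A_def h1_def)
    finally show ?thesis .
  qed
  have width: "h1 y - h1 x \<le> c" if "x \<in> set_pmf p" "y \<in> set_pmf p" for x y
    unfolding h1_def by (rule iid_expectation_Cons_diff_le[OF fin Suc.prems that])
  have "(\<integral>\<^sup>+xs. ennreal (exp (l * (h xs - E))) \<partial>replicate_pmf (Suc N) p)
      = (\<integral>\<^sup>+x. (\<integral>\<^sup>+xs. ennreal (exp (l * (h (x # xs) - E))) \<partial>replicate_pmf N p) \<partial>p)"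
    by (simp add: map_pmf_def)
  also have "\<dots> \<le> (\<integral>\<^sup>+x. ennreal A * ennreal (exp (l * (h1 x - E))) \<partial>p)"
    using inner by (intro nn_integral_mono_AE) (auto simp: AE_measure_pmf_iff)
  also have "\<dots> = ennreal A * (\<integral>\<^sup>+x. ennreal (exp (l * (h1 x - E))) \<partial>p)"
    by (rule nn_integral_cmult) simp
  also have "\<dots> \<le> ennreal A * ennreal (exp (l\<^sup>2 * c\<^sup>2 / 8))"
    unfolding E using Hoeffding_lemma_pmf[OF fin l width] by (intro mult_left_mono) simp_all
  also have "\<dots> = ennreal (exp (l\<^sup>2 * real (Suc N) * c\<^sup>2 / 8))"
    by (simp add: A_def ennreal_mult'[symmetric] mult_exp_exp algebra_simps add_divide_distrib)
  finally show ?case unfolding E_def .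
qed

lemma poisson_sample_tail_le:
  assumes fin: "finite (set_pmf p)" and n: "n \<ge> 1" and l: "l > 0"
    and bd: "bounded_differences (set_pmf p) h c"
  shows "emeasure (poisson_sample n p) {xs. t < h xs - iid_expectation p (length xs) h}
           \<le> ennreal (exp (real n * (exp (l\<^sup>2 * c\<^sup>2 / 8) - 1) - l * t))"
proof -
  let ?D = "\<lambda>xs. h xs - iid_expectation p (length xs) h"
  have "(\<integral>\<^sup>+xs. ennreal (exp (l * ?D xs)) \<partial>poisson_sample n p)
      = (\<integral>\<^sup>+N. (\<integral>\<^sup>+xs. ennreal (exp (l * (h xs - iid_expectation p N h))) \<partial>replicate_pmf N p) \<partial>poisson_pmf (real n))"
    unfolding poisson_sample_def nn_integral_bind_pmf
    by (intro nn_integral_cong nn_integral_cong_AE) (auto simp: AE_measure_pmf_iff set_replicate_pmf)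
  also have "\<dots> \<le> (\<integral>\<^sup>+N. ennreal (exp ((l\<^sup>2 * c\<^sup>2 / 8) * real N)) \<partial>poisson_pmf (real n))"
    using nn_integral_replicate_pmf_exp_le[OF fin l bd]
    by (intro nn_integral_mono) (simp add: algebra_simps)
  also have "\<dots> = ennreal (exp (real n * (exp (l\<^sup>2 * c\<^sup>2 / 8) - 1)))"
    using n by (intro nn_integral_poisson_exp) simp
  finally have mgf: "(\<integral>\<^sup>+xs. ennreal (exp (l * ?D xs)) \<partial>poisson_sample n p)
      \<le> ennreal (exp (real n * (exp (l\<^sup>2 * c\<^sup>2 / 8) - 1)))" .
  have "emeasure (poisson_sample n p) {xs. t < ?D xs}
      \<le> emeasure (poisson_sample n p) {xs \<in> space (poisson_sample n p). t \<le> ?D xs}"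
    by (intro emeasure_mono) auto
  also have "\<dots> \<le> ennreal (exp (- l * t)) *
      (\<integral>\<^sup>+xs. ennreal (exp (l * ?D xs)) * indicator (space (poisson_sample n p)) xs \<partial>poisson_sample n p)"
    using l by (intro Chernoff_ineq_nn_integral_ge) auto
  also have "\<dots> \<le> ennreal (exp (- l * t)) * ennreal (exp (real n * (exp (l\<^sup>2 * c\<^sup>2 / 8) - 1)))"
    using mgf by (intro mult_left_mono) simp_all
  also have "\<dots> = ennreal (exp (real n * (exp (l\<^sup>2 * c\<^sup>2 / 8) - 1) - l * t))"
    by (simp add: ennreal_mult'[symmetric] mult_exp_exp)
  finally show ?thesis .
qed

lemma poisson_sample_tail_exp_le:
  assumes fin: "finite (set_pmf p)" and n: "n \<ge> 1" and c: "c > 0" "1 \<le> c * real n"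
    and \<epsilon>: "0 < \<epsilon>" "\<epsilon> < 1" and bd: "bounded_differences (set_pmf p) h c"
  shows "emeasure (poisson_sample n p) {xs. \<epsilon> / 5 < h xs - iid_expectation p (length xs) h}
           \<le> ennreal (exp (- (\<epsilon>\<^sup>2 / (32 * c\<^sup>2 * real n))))"
proof -
  define w where "w = \<epsilon>\<^sup>2 / (c\<^sup>2 * real n)"
  \<comment> \<open>Chernoff parameter; \<open>\<epsilon> < 1 \<le> c n\<close> keeps \<open>l\<^sup>2 c\<^sup>2 / 8 \<le> 1/8\<close>, where \<open>exp\<close> is nearly linear.\<close>
  define l where "l = \<epsilon> / (c\<^sup>2 * real n)"
  define x where "x = l\<^sup>2 * c\<^sup>2 / 8"
  have rn: "real n \<ge> 1" using n by simp
  have l: "l > 0" using \<epsilon> c rn by (simp add: l_def)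
  have w: "0 \<le> w" "w \<le> real n"
  proof -
    have "\<epsilon>\<^sup>2 \<le> 1" using \<epsilon> by (simp add: power_le_one)
    also have "1 \<le> (c * real n)\<^sup>2" using c by (simp add: one_le_power)
    finally show "w \<le> real n" using c rn by (simp add: w_def field_simps power2_eq_square)
  qed (simp add: w_def)
  have x: "x = w / (8 * real n)" "0 \<le> x" "x \<le> 1/8"
    using c rn w by (auto simp: x_def l_def w_def power2_eq_square field_simps)
  have "exp x \<le> 1 + x + x\<^sup>2" using x by (intro exp_bound) auto
  also have "x\<^sup>2 \<le> x / 8" using mult_left_mono[OF x(3) x(2)] by (simp add: power2_eq_square)
  finally have "real n * (exp x - 1) \<le> real n * (9/8 * x)" using rn by (intro mult_left_mono) auto
  also have "\<dots> = 9 * w / 64" using x rn by simp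
  finally have mgf: "real n * (exp x - 1) \<le> 9 * w / 64" .
  have "l * (\<epsilon> / 5) = w / 5" by (simp add: l_def w_def power2_eq_square)
  with mgf w have "real n * (exp x - 1) - l * (\<epsilon> / 5) \<le> - (w / 32)" by linarith
  moreover have "w / 32 = \<epsilon>\<^sup>2 / (32 * c\<^sup>2 * real n)" by (simp add: w_def)
  ultimately show ?thesis
    using poisson_sample_tail_le[OF fin n l bd, of "\<epsilon> / 5"] unfolding x_def
    by (auto elim!: order_trans intro!: ennreal_leI)
qed

lemma poisson_sample_length_tail_le:
  assumes n: "n \<ge> 1" and c: "c > 0" "1 \<le> c * real n" and \<epsilon>: "0 < \<epsilon>" "\<epsilon> < 1" and \<sigma>: "\<bar>\<sigma>\<bar> = 1"
  shows "emeasure (poisson_sample n p) {xs. \<epsilon> / (2 * c) < \<sigma> * (real (length xs) - real n)}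
           \<le> ennreal (exp (- (\<epsilon>\<^sup>2 / (32 * c\<^sup>2 * real n))))"
proof -
  define \<mu> where "\<mu> = \<epsilon> / (4 * c * real n)"
  have rn: "real n \<ge> 1" using n by simp
  have \<mu>: "\<mu> > 0" "\<bar>\<mu> * \<sigma>\<bar> \<le> 1"
    using c \<epsilon> rn \<sigma> by (auto simp: \<mu>_def abs_mult field_simps)
  have "\<sigma>\<^sup>2 = 1" using \<sigma> by (metis power2_abs power_one)
  then have "real n * (\<mu> * \<sigma>)\<^sup>2 - \<mu> * (\<epsilon> / (2 * c)) = - (\<epsilon>\<^sup>2 / (16 * c\<^sup>2 * real n))"
    using c rn by (simp add: \<mu>_def power_mult_distrib power2_eq_square field_simps)
  also have "\<dots> \<le> - (\<epsilon>\<^sup>2 / (32 * c\<^sup>2 * real n))"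
    using c rn by (simp add: frac_le)
  finally have exponent: "real n * (\<mu> * \<sigma>)\<^sup>2 - \<mu> * (\<epsilon> / (2 * c)) \<le> - (\<epsilon>\<^sup>2 / (32 * c\<^sup>2 * real n))" .
  have "emeasure (poisson_sample n p) {xs. \<epsilon> / (2 * c) < \<sigma> * (real (length xs) - real n)}
      = emeasure (map_pmf length (poisson_sample n p)) {N. \<epsilon> / (2 * c) < \<sigma> * (real N - real n)}"
    by (simp add: vimage_def)
  also have "\<dots> \<le> ennreal (exp (real n * (\<mu> * \<sigma>)\<^sup>2 - \<mu> * (\<epsilon> / (2 * c))))"
    unfolding map_pmf_length_poisson_sample using rn \<mu> by (intro poisson_tail_le) auto
  also have "\<dots> \<le> ennreal (exp (- (\<epsilon>\<^sup>2 / (32 * c\<^sup>2 * real n))))"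
    using exponent by (intro ennreal_leI) simp
  finally show ?thesis .
qed

section \<open>Functions of bounded sensitivity\<close>

locale finite_sensitivity =
  fixes k :: nat and p :: "nat pmf" and f :: "nat list \<Rightarrow> real"
  assumes support: "set_pmf p \<subseteq> {1..k}" and bdd: "bdd_above (sens_set k f)"
begin

abbreviation S :: real where "S \<equiv> sensitivity k f"

lemma finite_support: "finite (set_pmf p)"
  using support finite_subset by blast

lemma abs_diff_le_sensitivity:
  "set x \<subseteq> {1..k} \<Longrightarrow> set y \<subseteq> {1..k} \<Longrightarrow> one_edit x y \<Longrightarrow> \<bar>f x - f y\<bar> \<le> S"
  unfolding sensitivity_def by (rule cSup_upper[OF _ bdd]) (auto simp: sens_set_def)

lemma bounded_differences_sensitivity: "bounded_differences (set_pmf p) f S"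
  unfolding bounded_differences_def
proof (intro allI impI)
  fix u v a b assume "set u \<subseteq> set_pmf p" "set v \<subseteq> set_pmf p" "a \<in> set_pmf p" "b \<in> set_pmf p"
  then have "set (u @ a # v) \<subseteq> {1..k}" "set (u @ b # v) \<subseteq> {1..k}" using support by auto
  then show "\<bar>f (u @ a # v) - f (u @ b # v)\<bar> \<le> S"
    by (rule abs_diff_le_sensitivity) (unfold one_edit_def, blast)
qed

lemma abs_Cons_diff_le: "set (a # xs) \<subseteq> {1..k} \<Longrightarrow> \<bar>f (a # xs) - f xs\<bar> \<le> S"
  by (rule abs_diff_le_sensitivity) (simp_all add: one_edit_def, metis append_Nil)

lemma sensitivity_nonneg: "0 \<le> S"
proof -
  obtain a where "a \<in> set_pmf p" using set_pmf_not_empty[of p] by blast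
  then show ?thesis using abs_Cons_diff_le[of a "[]"] support by (auto intro: order_trans[OF abs_ge_zero])
qed

lemma abs_diff_Nil_le: "set xs \<subseteq> {1..k} \<Longrightarrow> \<bar>f xs - f []\<bar> \<le> S * real (length xs)"
proof (induction xs)
  case (Cons a xs)
  then show ?case using abs_Cons_diff_le[OF Cons.prems] by (auto simp: algebra_simps)
qed simp

lemma set_replicate_pmf_subset: "xs \<in> set_pmf (replicate_pmf N p) \<Longrightarrow> set xs \<subseteq> {1..k}"
  using support by (auto simp: set_replicate_pmf)

lemma set_poisson_sample_subset: "xs \<in> set_pmf (poisson_sample n p) \<Longrightarrow> set xs \<subseteq> {1..k}"
  unfolding poisson_sample_def using set_replicate_pmf_subset by auto

lemma integrable_replicate_pmf: "integrable (replicate_pmf N p) (h :: nat list \<Rightarrow> real)"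
  by (rule integrable_measure_pmf_finite[OF finite_set_pmf_replicate_pmf[OF finite_support]])

lemma abs_iid_expectation_Suc_diff_le: "\<bar>iid_expectation p (Suc N) f - iid_expectation p N f\<bar> \<le> S"
proof -
  have "iid_expectation p (Suc N) f - iid_expectation p N f
      = measure_pmf.expectation p (\<lambda>x. iid_expectation p N (\<lambda>xs. f (x # xs)))
        - measure_pmf.expectation p (\<lambda>_. iid_expectation p N f)"
    by (simp add: iid_expectation_Suc[OF finite_support])
  also have "\<dots> = measure_pmf.expectation p (\<lambda>x. iid_expectation p N (\<lambda>xs. f (x # xs)) - iid_expectation p N f)"
    by (rule Bochner_Integration.integral_diff[symmetric])
       (simp_all add: integrable_measure_pmf_finite[OF finite_support])
  also have "\<dots> = measure_pmf.expectation p (\<lambda>x. iid_expectation p N (\<lambda>xs. f (x # xs) - f xs))"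
    unfolding iid_expectation_def
    by (simp add: Bochner_Integration.integral_diff[OF integrable_replicate_pmf integrable_replicate_pmf])
  also have "\<bar>\<dots>\<bar> \<le> S"
    unfolding iid_expectation_def
  proof (intro abs_expectation_le_const integrable_replicate_pmf integrable_measure_pmf_finite[OF finite_support])
    fix x xs assume "x \<in> set_pmf p" "xs \<in> set_pmf (replicate_pmf N p)"
    then have "set (x # xs) \<subseteq> {1..k}" using support set_replicate_pmf_subset[of xs N] by auto
    then show "\<bar>f (x # xs) - f xs\<bar> \<le> S" by (rule abs_Cons_diff_le)
  qed
  finally show ?thesis .
qed

lemma abs_iid_expectation_diff_le:
  "\<bar>iid_expectation p N f - iid_expectation p M f\<bar> \<le> S * \<bar>real N - real M\<bar>"
proof -
  have shift: "\<bar>iid_expectation p (M + d) f - iid_expectation p M f\<bar> \<le> S * real d" for M d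
  proof (induction d)
    case (Suc d)
    then show ?case using abs_iid_expectation_Suc_diff_le[of "M + d"] by (simp add: algebra_simps)
  qed simp
  show ?thesis
    using shift[of M "N - M"] shift[of N "M - N"]
    by (cases "M \<le> N") (auto simp: abs_minus_commute of_nat_diff)
qed

lemma integrable_poisson_sample: "n \<ge> 1 \<Longrightarrow> integrable (poisson_sample n p) f"
proof (rule Bochner_Integration.integrable_bound)
  assume "n \<ge> 1"
  then have "integrable (map_pmf length (poisson_sample n p)) real"
    using integrable_poisson_real[of "real n"] by (simp add: map_pmf_length_poisson_sample)
  then have "integrable (poisson_sample n p) (\<lambda>xs. real (length xs))" by simp
  then show "integrable (poisson_sample n p) (\<lambda>xs. \<bar>f []\<bar> + S * real (length xs))" by simp
  show "AE xs in poisson_sample n p. norm (f xs) \<le> norm (\<bar>f []\<bar> + S * real (length xs))"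
    unfolding AE_measure_pmf_iff
  proof
    fix xs assume "xs \<in> set_pmf (poisson_sample n p)"
    then have "\<bar>f xs - f []\<bar> \<le> S * real (length xs)" by (intro abs_diff_Nil_le set_poisson_sample_subset)
    then show "norm (f xs) \<le> norm (\<bar>f []\<bar> + S * real (length xs))" by auto
  qed
qed simp

lemma expectation_poisson_sample:
  assumes "n \<ge> 1"
  shows "integrable (poisson_pmf (real n)) (\<lambda>N. iid_expectation p N f)"
    and "measure_pmf.expectation (poisson_sample n p) f
           = measure_pmf.expectation (poisson_pmf (real n)) (\<lambda>N. iid_expectation p N f)"
  using expectation_bind_pmf[OF integrable_poisson_sample[OF assms, unfolded poisson_sample_def]
      integrable_replicate_pmf]
  by (simp_all add: poisson_sample_def iid_expectation_def)

lemma abs_expectation_poisson_sample_diff_le: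
  assumes n: "n \<ge> 1"
  shows "\<bar>measure_pmf.expectation (poisson_sample n p) f - iid_expectation p n f\<bar> \<le> 7/4 * S * sqrt (real n)"
proof -
  let ?P = "poisson_pmf (real n)" and ?g = "\<lambda>N. iid_expectation p N f"
  have dev: "integrable ?P (\<lambda>N. \<bar>real N - real n\<bar>)"
    using integrable_poisson_real[of "real n"] n by simp
  have "\<bar>measure_pmf.expectation (poisson_sample n p) f - ?g n\<bar>
      = \<bar>measure_pmf.expectation ?P (\<lambda>N. ?g N - ?g n)\<bar>"
    using expectation_poisson_sample[OF n] by simp
  also have "\<dots> \<le> measure_pmf.expectation ?P (\<lambda>N. S * \<bar>real N - real n\<bar>)"
    using expectation_poisson_sample(1)[OF n] dev
    by (intro order_trans[OF integral_abs_bound] integral_mono abs_iid_expectation_diff_le) auto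
  also have "\<dots> = S * measure_pmf.expectation ?P (\<lambda>N. \<bar>real N - real n\<bar>)"
    by (rule integral_mult_right_zero)
  also have "\<dots> \<le> S * (7/4 * sqrt (real n))"
    using n by (intro mult_left_mono sensitivity_nonneg expectation_poisson_abs_deviation_le) simp
  finally show ?thesis by simp
qed

text \<open>The length events are written as \<open>\<sigma> * (length xs - n)\<close> with \<open>\<sigma> = \<plusminus>1\<close>, the shape of
  \<open>poisson_sample_length_tail_le\<close>.\<close>
lemma deviation_cases:
  assumes S: "S > 0"
    and dev: "\<bar>measure_pmf.expectation (poisson_sample n p) f - iid_expectation p n f\<bar> \<le> 3/10 * \<epsilon>"
    and large: "\<epsilon> < \<bar>f xs - measure_pmf.expectation (poisson_sample n p) f\<bar>"
  shows "\<epsilon> / 5 < f xs - iid_expectation p (length xs) f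
    \<or> \<epsilon> / 5 < - f xs - iid_expectation p (length xs) (\<lambda>xs. - f xs)
    \<or> \<epsilon> / (2 * S) < 1 * (real (length xs) - real n)
    \<or> \<epsilon> / (2 * S) < - 1 * (real (length xs) - real n)"
proof (rule ccontr)
  assume "\<not> ?thesis"
  then have sample: "\<bar>f xs - iid_expectation p (length xs) f\<bar> \<le> \<epsilon> / 5"
    and length: "\<bar>real (length xs) - real n\<bar> \<le> \<epsilon> / (2 * S)"
    by (auto simp: iid_expectation_uminus abs_if)
  have "\<bar>iid_expectation p (length xs) f - iid_expectation p n f\<bar> \<le> S * (\<epsilon> / (2 * S))"
    using S by (intro order_trans[OF abs_iid_expectation_diff_le mult_left_mono[OF length]]) simp
  also have "\<dots> = \<epsilon> / 2" using S by simp
  finally show False using sample dev large by linarith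
qed

lemma prob_deviation_le_of_mean_close:
  assumes n: "n \<ge> 1" and S_pos: "S > 0" and Sn: "1 \<le> S * real n" and \<epsilon>: "0 < \<epsilon>" "\<epsilon> < 1"
    and dev: "\<bar>measure_pmf.expectation (poisson_sample n p) f - iid_expectation p n f\<bar> \<le> 3/10 * \<epsilon>"
  shows "measure_pmf.prob (poisson_sample n p)
           {xs. \<bar>f xs - measure_pmf.expectation (poisson_sample n p) f\<bar> > \<epsilon>}
         \<le> 4 * exp (- (\<epsilon>\<^sup>2 / (32 * S\<^sup>2 * real n)))"
proof -
  let ?Q = "poisson_sample n p"
  define T where "T = exp (- (\<epsilon>\<^sup>2 / (32 * S\<^sup>2 * real n)))"
  define A1 A2 B1 B2 where
    "A1 = {xs. \<epsilon> / 5 < f xs - iid_expectation p (length xs) f}" and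
    "A2 = {xs. \<epsilon> / 5 < - f xs - iid_expectation p (length xs) (\<lambda>xs. - f xs)}" and
    "B1 = {xs :: nat list. \<epsilon> / (2 * S) < 1 * (real (length xs) - real n)}" and
    "B2 = {xs :: nat list. \<epsilon> / (2 * S) < - 1 * (real (length xs) - real n)}"
  have "emeasure ?Q A1 \<le> ennreal T" "emeasure ?Q A2 \<le> ennreal T"
    unfolding A1_def A2_def T_def
    by (intro poisson_sample_tail_exp_le finite_support n S_pos Sn \<epsilon>
          bounded_differences_sensitivity bounded_differences_uminus)+
  moreover have "emeasure ?Q B1 \<le> ennreal T" "emeasure ?Q B2 \<le> ennreal T"
    unfolding B1_def B2_def T_def
    by (intro poisson_sample_length_tail_le n S_pos Sn \<epsilon>; simp)+
  ultimately have tails: "measure_pmf.prob ?Q A1 \<le> T" "measure_pmf.prob ?Q A2 \<le> T"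
      "measure_pmf.prob ?Q B1 \<le> T" "measure_pmf.prob ?Q B2 \<le> T"
    by (simp_all add: measure_pmf.emeasure_eq_measure T_def)
  have "measure_pmf.prob ?Q {xs. \<bar>f xs - measure_pmf.expectation ?Q f\<bar> > \<epsilon>}
      \<le> measure_pmf.prob ?Q ((A1 \<union> A2) \<union> (B1 \<union> B2))"
    using deviation_cases[OF S_pos dev]
    by (intro measure_pmf.finite_measure_mono) (auto simp: A1_def A2_def B1_def B2_def)
  also have "\<dots> \<le> (measure_pmf.prob ?Q A1 + measure_pmf.prob ?Q A2)
                  + (measure_pmf.prob ?Q B1 + measure_pmf.prob ?Q B2)"
    by (intro order_trans[OF measure_Un_le] add_mono measure_Un_le) auto
  also have "\<dots> \<le> 4 * T" using tails by linarith
  finally show ?thesis unfolding T_def .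
qed

theorem prob_deviation_poisson_sample_le:
  assumes n: "n \<ge> 1" and S: "1 / real n \<le> S" and \<epsilon>: "0 < \<epsilon>" "\<epsilon> < 1"
  shows "measure_pmf.prob (poisson_sample n p)
           {xs. \<bar>f xs - measure_pmf.expectation (poisson_sample n p) f\<bar> > \<epsilon>}
         \<le> 4 * exp (- (\<epsilon>\<^sup>2 / (2 * real n * (4 * S)\<^sup>2)))"
proof -
  have rn: "real n \<ge> 1" using n by simp
  have S_pos: "S > 0" and Sn: "1 \<le> S * real n"
    using S rn by (auto simp: field_simps intro: less_le_trans[of 0 "1 / real n"])
  have rhs: "\<epsilon>\<^sup>2 / (2 * real n * (4 * S)\<^sup>2) = \<epsilon>\<^sup>2 / (32 * S\<^sup>2 * real n)"
    by (simp add: power_mult_distrib)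
  show ?thesis
  proof (cases "\<epsilon>\<^sup>2 / (32 * S\<^sup>2 * real n) \<le> 5/4")
    case True
    then show ?thesis
      unfolding rhs using one_le_four_exp_minus measure_pmf.prob_le_1 order_trans by blast
  next
    case False
    have "7/4 * S * sqrt (real n) \<le> 3/10 * \<epsilon>"
    proof (rule power2_le_imp_le)
      have "(7/4 * S * sqrt (real n))\<^sup>2 = 49/16 * (S\<^sup>2 * real n)"
        by (simp add: power_mult_distrib power_divide)
      also have "\<dots> \<le> 49/16 * (\<epsilon>\<^sup>2 / 40)" using False S_pos rn by (simp add: field_simps)
      also have "\<dots> \<le> (3/10 * \<epsilon>)\<^sup>2" using zero_le_power2[of \<epsilon>] by (simp add: power_mult_distrib power_divide)
      finally show "(7/4 * S * sqrt (real n))\<^sup>2 \<le> (3/10 * \<epsilon>)\<^sup>2" .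
    qed (use \<epsilon> in simp)
    then have "\<bar>measure_pmf.expectation (poisson_sample n p) f - iid_expectation p n f\<bar> \<le> 3/10 * \<epsilon>"
      using abs_expectation_poisson_sample_diff_le[OF n] by linarith
    then show ?thesis unfolding rhs by (rule prob_deviation_le_of_mean_close[OF n S_pos Sn \<epsilon>])
  qed
qed

end

theorem mainTheorem7:
  fixes k n :: nat and p :: "nat pmf" and f :: "nat list \<Rightarrow> real" and \<epsilon> :: real
  assumes "k \<ge> 1" and "n \<ge> 1"
    and "set_pmf p \<subseteq> {1..k}"
    and "bdd_above (sens_set k f)"
    and "1 / real n \<le> sensitivity k f"
    and "0 < \<epsilon>" and "\<epsilon> < 1"
  shows "measure_pmf.prob (poisson_sample n p)
           {xs. \<bar>f xs - measure_pmf.expectation (poisson_sample n p) f\<bar> > \<epsilon>}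
         \<le> 4 * exp (- (\<epsilon>\<^sup>2 / (2 * real n * (4 * sensitivity k f)\<^sup>2)))"
proof -
  \<comment> \<open>\<open>k \<ge> 1\<close> is implied by \<open>set_pmf p \<subseteq> {1..k}\<close>, as \<open>set_pmf p\<close> is never empty.\<close>
  interpret finite_sensitivity k p f by unfold_locales (use assms in auto)
  show ?thesis using assms by (intro prob_deviation_poisson_sample_le) auto
qed

end
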